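(* Assume the setup and monomial order in the context. The unique minimal (with respect to inclusion) subset of $X^*$ generating the monoid ideal $\mathrm{Tip}(I)$ of the free monoid $X^*$ is $$\{v_{j,n}v^\dagger_{1,r(i)}: v\in M,\ (j,i)\in[n]^2\}.$$ In particular $X\cap\mathrm{Tip}(I)=\emptyset$.
   Context: Let $k$ be a field and $n\ge 2$ an integer; write $[n]=\{1,\dots,n\}$ and $r(i)=n+1-i$. Let $X=\{u_{j,i},u^*_{j,i}:(j,i)\in[n]^2\}$ be a set of $2n^2$ distinct symbols and let $*$ be the involution of $X$ exchanging $u_{j,i}$ and $u^*_{j,i}$. Let $k\langle X\rangle$ be the free unital $k$-algebra on $X$, with $k$-basis the free monoid $X^*$ of monomials. For an $n\times n$ matrix $v=(v_{j,i})$ with entries in $X$ define $n\times n$ matrices $v^t,v^\star,v^\dagger$ with entries in $X$ by $v^t_{j,i}=v_{i,j}$, $v^\star_{j,i}=(v_{r(j),r(i)})^*$, $v^\dagger_{j,i}=(v_{r(i),r(j)})^*$. Let $u=(u_{j,i})$ and $M=\{u,u^t,u^\star,u^\dagger\}$. Let $I$ be the two-sided ideal generated by $R=\{\sum_{s=1}^n v_{j,r(s)}v^\dagger_{s,r(i)}-\delta_{j,i}1: v\in M,(j,i)\in[n]^2\}$. Monomial order: let $\le$ be the total order on $X$ with $u^*_{t,s}<u_{j,i}$ for all indices, $u_{t,s}<u_{j,i}$ iff $(t,s)<(j,i)$ lexicographically, and $u^*_{t,s}<u^*_{j,i}$ iff $(j,i)<(t,s)$ lexicographically; extend it degree-lexicographically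 to $X^*$. For $0\ne p\in k\langle X\rangle$, $\mathrm{tip}(p)$ is the $\le$-largest monomial with nonzero coefficient in $p$; $\mathrm{Tip}(I)=\{\mathrm{tip}(p):0\ne p\in I\}$, a monoid ideal (closed under multiplication by monomials on both sides). *)

theory Defs
  imports Main
begin

section \<open>Alphabet X = {u_{j,i}, u*_{j,i}}\<close>

datatype xsym = U nat nat | Us nat nat

fun inv_sym :: "xsym \<Rightarrow> xsym" where
  "inv_sym (U j i) = Us j i"
| "inv_sym (Us j i) = U j i"

definition idx :: "nat \<Rightarrow> nat set" where "idx n = {1..n}"

definition Xn :: "nat \<Rightarrow> xsym set" where
  "Xn n = {U j i | j i. j \<in> idx n \<and> i \<in> idx n} \<union> {Us j i | j i. j \<in> idx n \<and> i \<in> idx n}"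

definition words :: "nat \<Rightarrow> xsym list set" where
  "words n = {w. set w \<subseteq> Xn n}"

section \<open>Free algebra k<X>: finitely supported coefficient functions on X^*\<close>

definition alg :: "nat \<Rightarrow> (xsym list \<Rightarrow> 'k::field) set" where
  "alg n = {p. finite {w. p w \<noteq> 0} \<and> (\<forall>w. p w \<noteq> 0 \<longrightarrow> w \<in> words n)}"

definition padd :: "(xsym list \<Rightarrow> 'k::field) \<Rightarrow> (xsym list \<Rightarrow> 'k) \<Rightarrow> xsym list \<Rightarrow> 'k" where
  "padd p q = (\<lambda>w. p w + q w)"

definition psub :: "(xsym list \<Rightarrow> 'k::field) \<Rightarrow> (xsym list \<Rightarrow> 'k) \<Rightarrow> xsym list \<Rightarrow> 'k" where
  "psub p q = (\<lambda>w. p w - q w)"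

definition pmul :: "(xsym list \<Rightarrow> 'k::field) \<Rightarrow> (xsym list \<Rightarrow> 'k) \<Rightarrow> xsym list \<Rightarrow> 'k" where
  "pmul p q = (\<lambda>w. \<Sum>i\<in>{0..length w}. p (take i w) * q (drop i w))"

definition pzero :: "xsym list \<Rightarrow> 'k::field" where
  "pzero = (\<lambda>w. 0)"

definition mono :: "xsym list \<Rightarrow> xsym list \<Rightarrow> 'k::field" where
  "mono m = (\<lambda>w. if w = m then 1 else 0)"

definition psum :: "'a set \<Rightarrow> ('a \<Rightarrow> xsym list \<Rightarrow> 'k::field) \<Rightarrow> xsym list \<Rightarrow> 'k" where
  "psum A f = (\<lambda>w. \<Sum>a\<in>A. f a w)"

inductive_set gen_ideal :: "nat \<Rightarrow> (xsym list \<Rightarrow> 'k::field) set \<Rightarrow> (xsym list \<Rightarrow> 'k) set"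
  for n :: nat and G :: "(xsym list \<Rightarrow> 'k) set" where
  zero: "pzero \<in> gen_ideal n G"
| gen: "\<lbrakk>a \<in> alg n; g \<in> G; b \<in> alg n\<rbrakk> \<Longrightarrow> pmul (pmul a g) b \<in> gen_ideal n G"
| add: "\<lbrakk>p \<in> gen_ideal n G; q \<in> gen_ideal n G\<rbrakk> \<Longrightarrow> padd p q \<in> gen_ideal n G"

definition rr :: "nat \<Rightarrow> nat \<Rightarrow> nat" where "rr n i = n + 1 - i"

definition umat :: "nat \<Rightarrow> nat \<Rightarrow> xsym" where "umat = (\<lambda>j i. U j i)"

definition mtr :: "(nat \<Rightarrow> nat \<Rightarrow> xsym) \<Rightarrow> nat \<Rightarrow> nat \<Rightarrow> xsym" where
  "mtr v = (\<lambda>j i. v i j)"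

definition mstar :: "nat \<Rightarrow> (nat \<Rightarrow> nat \<Rightarrow> xsym) \<Rightarrow> nat \<Rightarrow> nat \<Rightarrow> xsym" where
  "mstar n v = (\<lambda>j i. inv_sym (v (rr n j) (rr n i)))"

definition mdag :: "nat \<Rightarrow> (nat \<Rightarrow> nat \<Rightarrow> xsym) \<Rightarrow> nat \<Rightarrow> nat \<Rightarrow> xsym" where
  "mdag n v = (\<lambda>j i. inv_sym (v (rr n i) (rr n j)))"

definition Mset :: "nat \<Rightarrow> (nat \<Rightarrow> nat \<Rightarrow> xsym) set" where
  "Mset n = {umat, mtr umat, mstar n umat, mdag n umat}"

definition Rrel :: "nat \<Rightarrow> (xsym list \<Rightarrow> 'k::field) set" where
  "Rrel n = {psub (psum (idx n) (\<lambda>s. mono [v j (rr n s), mdag n v s (rr n i)]))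
                  (if j = i then mono [] else pzero)
             | v j i. v \<in> Mset n \<and> j \<in> idx n \<and> i \<in> idx n}"

definition Iideal :: "nat \<Rightarrow> (xsym list \<Rightarrow> 'k::field) set" where
  "Iideal n = gen_ideal n (Rrel n)"

fun sym_less :: "xsym \<Rightarrow> xsym \<Rightarrow> bool" where
  "sym_less (Us t s) (U j i) = True"
| "sym_less (U t s) (Us j i) = False"
| "sym_less (U t s) (U j i) = (t < j \<or> (t = j \<and> s < i))"
| "sym_less (Us t s) (Us j i) = (j < t \<or> (j = t \<and> i < s))"

definition word_less :: "xsym list \<Rightarrow> xsym list \<Rightarrow> bool" where
  "word_less w w' = (length w < length w' \<or>
     (length w = length w' \<and> (w, w') \<in> lexord {(a, b). sym_less a b}))"

definition word_le :: "xsym list \<Rightarrow> xsym list \<Rightarrow> bool" where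
  "word_le w w' = (w = w' \<or> word_less w w')"

definition tip :: "(xsym list \<Rightarrow> 'k::field) \<Rightarrow> xsym list" where
  "tip p = (THE m. p m \<noteq> 0 \<and> (\<forall>m'. p m' \<noteq> 0 \<longrightarrow> word_le m' m))"

definition Tip :: "(xsym list \<Rightarrow> 'k::field) set \<Rightarrow> xsym list set" where
  "Tip J = {tip p | p. p \<in> J \<and> p \<noteq> pzero}"

definition monoid_ideal_gen :: "nat \<Rightarrow> xsym list set \<Rightarrow> xsym list set" where
  "monoid_ideal_gen n G = {a @ g @ b | a g b. a \<in> words n \<and> g \<in> G \<and> b \<in> words n}"

definition tip_generators :: "nat \<Rightarrow> xsym list set" where
  "tip_generators n = {[v j n, mdag n v 1 (rr n i)] | v j i. v \<in> Mset n \<and> j \<in> idx n \<and> i \<in> idx n}"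

end

theory Submission
  imports Defs "HOL-Library.Function_Algebras"
begin

text \<open>
  The proof is Bergman's diamond lemma.  Up to reindexing, the relations in \<open>R\<close> are monic with
  two-letter tips, and these tips are exactly the words \<open>v\<^sub>j\<^sub>,\<^sub>n v\<^sup>\<dagger>\<^sub>1\<^sub>,\<^sub>r\<^sub>(\<^sub>i\<^sub>)\<close>.
  Every ambiguity resolves: two relations with the same tip (coming from \<open>u, u\<^sup>t\<close> or from
  \<open>u\<^sup>\<star>, u\<^sup>\<dagger>\<close>) and the four kinds of overlapping tips reduce to combinations of
  relations with smaller tips, because a double sum \<open>\<Sum>\<^sub>s\<^sub>,\<^sub>t\<close> can be reduced by summing
  first over either index; disjoint ambiguities always resolve.  Hence every nonzero element of
  \<open>I\<close> has a tip containing the tip of a relation, so \<open>Tip(I)\<close> is generated by these words.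
  Since they all have length two, they lie in every generating set of \<open>Tip(I)\<close>, and no single
  letter is a tip.
\<close>

section \<open>The monomial order\<close>

lemma sym_less_irrefl [simp]: "\<not> sym_less x x"
  by (cases x) auto

lemma sym_less_trans: "sym_less x y \<Longrightarrow> sym_less y z \<Longrightarrow> sym_less x z"
  by (cases x; cases y; cases z) auto

lemma sym_less_linear: "x \<noteq> y \<Longrightarrow> sym_less x y \<or> sym_less y x"
  by (cases x; cases y) auto

lemma trans_sym_less: "trans {(x, y). sym_less x y}"
  by (auto intro: transI sym_less_trans)

lemma word_less_irrefl [simp]: "\<not> word_less u u"
  unfolding word_less_def using lexord_irreflexive[of "{(x, y). sym_less x y}" u] by auto

lemma word_less_trans: "word_less u v \<Longrightarrow> word_less v w \<Longrightarrow> word_less u w"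
  unfolding word_less_def using lexord_trans[OF _ _ trans_sym_less] by auto

lemma word_less_linear: "u \<noteq> v \<Longrightarrow> word_less u v \<or> word_less v u"
  unfolding word_less_def using lexord_linear[of "{(x, y). sym_less x y}" u v] sym_less_linear
  by (metis (mono_tags, lifting) case_prod_conv linorder_neqE_nat mem_Collect_eq)

lemma word_less_append: "word_less u v \<Longrightarrow> word_less (a @ u @ b) (a @ v @ b)"
  unfolding word_less_def by (auto intro!: lexord_append_leftI lexord_sufI)

lemma word_less_length: "length u < length v \<Longrightarrow> word_less u v"
  by (simp add: word_less_def)

lemma word_less_Cons_first: "sym_less x y \<Longrightarrow> length u = length v \<Longrightarrow> word_less (x # u) (y # v)"
  by (simp add: word_less_def)

lemma word_less_Cons: "word_less u v \<Longrightarrow> word_less (x # u) (x # v)"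
  using word_less_append[of u v "[x]" "[]"] by simp

lemma word_le_trans: "word_le u v \<Longrightarrow> word_le v w \<Longrightarrow> word_le u w"
  unfolding word_le_def using word_less_trans by blast

lemma word_le_less_trans: "word_le u v \<Longrightarrow> word_less v w \<Longrightarrow> word_less u w"
  unfolding word_le_def using word_less_trans by blast

lemma word_le_antisym: "word_le u v \<Longrightarrow> word_le v u \<Longrightarrow> u = v"
  unfolding word_le_def using word_less_trans word_less_irrefl by blast

lemma word_le_linear: "word_le u v \<or> word_le v u"
  unfolding word_le_def using word_less_linear by blast

lemma word_le_append: "word_le u v \<Longrightarrow> word_le (a @ u @ b) (a @ v @ b)"
  unfolding word_le_def using word_less_append by blast

lemma Xn_simps [simp]:
  "U j i \<in> Xn n \<longleftrightarrow> j \<in> idx n \<and> i \<in> idx n"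
  "Us j i \<in> Xn n \<longleftrightarrow> j \<in> idx n \<and> i \<in> idx n"
  by (auto simp: Xn_def)

lemma words_simps [simp]:
  "[] \<in> words n"
  "x # w \<in> words n \<longleftrightarrow> x \<in> Xn n \<and> w \<in> words n"
  "w @ w' \<in> words n \<longleftrightarrow> w \<in> words n \<and> w' \<in> words n"
  by (auto simp: words_def)

lemma finite_Xn: "finite (Xn n)"
proof -
  have "Xn n = case_prod U ` (idx n \<times> idx n) \<union> case_prod Us ` (idx n \<times> idx n)"
    by (auto simp: Xn_def)
  then show ?thesis by (simp add: idx_def)
qed

text \<open>The order is not well-founded on all words (\<open>Us t 1\<close> decreases as \<open>t\<close> grows), but it
  is on the words over the finite alphabet \<open>Xn n\<close>.\<close>
lemma wf_word_less_words: "wf {(u, w). u \<in> words n \<and> word_less u w}"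
proof (rule wf_subset)
  let ?below = "\<lambda>w. {u \<in> words n. word_less u w}"
  have finite_below: "finite (?below w)" for w
  proof (rule finite_subset)
    show "?below w \<subseteq> {u. set u \<subseteq> Xn n \<and> length u \<le> length w}"
      by (auto simp: words_def word_less_def)
  qed (simp add: finite_lists_length_le finite_Xn)
  show "wf (measure (\<lambda>w. card (?below w)))" by simp
  show "{(u, w). u \<in> words n \<and> word_less u w} \<subseteq> measure (\<lambda>w. card (?below w))"
  proof clarify
    fix u w assume "u \<in> words n" "word_less u w"
    then have "?below u \<subseteq> ?below w" "u \<in> ?below w - ?below u"
      using word_less_trans by auto
    then have "?below u \<subset> ?below w" by blast
    then show "(u, w) \<in> measure (\<lambda>w. card (?below w))"
      by (simp add: psubset_card_mono finite_below)
  qed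
qed

lemma sum_fun_apply: "sum f A x = (\<Sum>a\<in>A. f a x)"
  by (induction A rule: infinite_finite_induct) auto

lemma padd_eq_plus: "padd p q = p + q"
  by (simp add: padd_def plus_fun_def)

lemma psub_eq_minus: "psub p q = p - q"
  by (simp add: psub_def fun_diff_def)

lemma pzero_eq_zero: "pzero = 0"
  by (simp add: pzero_def zero_fun_def)

lemma psum_eq_sum: "psum A f = sum f A"
  by (simp add: psum_def sum_fun_apply fun_eq_iff)

lemma mono_alg: "a \<in> words n \<Longrightarrow> mono a \<in> alg n"
  unfolding alg_def mono_def by (auto simp: finite_subset[of _ "{a}"])

definition smult :: "'k::field \<Rightarrow> (xsym list \<Rightarrow> 'k) \<Rightarrow> xsym list \<Rightarrow> 'k" where
  "smult c p = (\<lambda>w. c * p w)"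

lemma smult_apply [simp]: "smult c p w = c * p w"
  by (simp add: smult_def)

lemma smult_0_left [simp]: "smult 0 p = 0"
  and smult_1_left [simp]: "smult 1 p = p"
  and smult_0_right [simp]: "smult c 0 = 0"
  by (simp_all add: fun_eq_iff)

lemma smult_add_right: "smult c (p + q) = smult c p + smult c q"
  and smult_diff_right: "smult c (p - q) = smult c p - smult c q"
  and smult_add_left: "smult (c + d) p = smult c p + smult d p"
  and smult_smult: "smult c (smult d p) = smult (c * d) p"
  and smult_minus_one: "smult (- 1) p = - p"
  by (simp_all add: fun_eq_iff algebra_simps)

lemma smult_sum: "smult c (sum f A) = (\<Sum>x\<in>A. smult c (f x))"
  by (simp add: fun_eq_iff sum_fun_apply sum_distrib_left)

definition sandwich :: "xsym list \<Rightarrow> (xsym list \<Rightarrow> 'k::field) \<Rightarrow> xsym list \<Rightarrow> xsym list \<Rightarrow> 'k" where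
  "sandwich a p b = pmul (pmul (mono a) p) (mono b)"

lemma pmul_mono_left:
  "pmul (mono a) p w = (if take (length a) w = a then p (drop (length a) w) else 0)"
proof -
  have "pmul (mono a) p w = (\<Sum>i\<in>{0..length w}.
          if i = length a \<and> take (length a) w = a then p (drop (length a) w) else 0)"
    unfolding pmul_def mono_def by (rule sum.cong) auto
  also have "\<dots> = (if take (length a) w = a then p (drop (length a) w) else 0)"
    by (cases "take (length a) w = a") (auto simp: min_def split: if_splits)
  finally show ?thesis .
qed

lemma pmul_mono_right:
  "pmul p (mono b) w = (if length b \<le> length w \<and> drop (length w - length b) w = b
                        then p (take (length w - length b) w) else 0)"
proof -
  have "pmul p (mono b) w = (\<Sum>i\<in>{0..length w}. if i = length w - length b then
          (if length b \<le> length w \<and> drop (length w - length b) w = b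
           then p (take (length w - length b) w) else 0) else 0)"
    unfolding pmul_def mono_def by (rule sum.cong) auto
  then show ?thesis by simp
qed

lemma sandwich_append [simp]: "sandwich a p b (a @ u @ b) = p u"
  unfolding sandwich_def by (simp add: pmul_mono_left pmul_mono_right)

lemma sandwich_outside: "(\<And>u. w \<noteq> a @ u @ b) \<Longrightarrow> sandwich a p b w = 0"
proof -
  assume outside: "\<And>u. w \<noteq> a @ u @ b"
  let ?m = "length w - length b"
  have "\<not> (length b \<le> length w \<and> drop ?m w = b \<and> take (length a) (take ?m w) = a)"
    using outside[of "drop (length a) (take ?m w)"] by (metis append_take_drop_id append.assoc)
  then show ?thesis unfolding sandwich_def by (auto simp: pmul_mono_left pmul_mono_right)
qed

lemma sandwich_unique:
  assumes "\<And>u. F (a @ u @ b) = p u" and "\<And>w. (\<And>u. w \<noteq> a @ u @ b) \<Longrightarrow> F w = 0"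
  shows "F = sandwich a p b"
proof
  fix w show "F w = sandwich a p b w"
    using assms sandwich_outside[of w a b p] by (cases "\<exists>u. w = a @ u @ b") auto
qed

lemma sandwich_0 [simp]: "sandwich a 0 b = 0"
  by (rule sandwich_unique[symmetric]) simp_all

lemma sandwich_add: "sandwich a (p + q) b = sandwich a p b + sandwich a q b"
  by (rule sandwich_unique[symmetric]) (simp_all add: sandwich_outside)

lemma sandwich_diff: "sandwich a (p - q) b = sandwich a p b - sandwich a q b"
  by (rule sandwich_unique[symmetric]) (simp_all add: sandwich_outside)

lemma sandwich_smult: "sandwich a (smult c p) b = smult c (sandwich a p b)"
  by (rule sandwich_unique[symmetric]) (simp_all add: sandwich_outside)

lemma sandwich_sum: "sandwich a (sum f A) b = (\<Sum>x\<in>A. sandwich a (f x) b)"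
  by (rule sandwich_unique[symmetric]) (simp_all add: sandwich_outside sum_fun_apply)

lemma sandwich_mono: "sandwich a (mono u) b = mono (a @ u @ b)"
  by (rule sandwich_unique[symmetric]) (auto simp: sandwich_outside mono_def)

lemma sandwich_Nil [simp]: "sandwich [] p [] = p"
  by (rule sandwich_unique[symmetric]) auto

lemma sandwich_sandwich: "sandwich a (sandwich a' p b') b = sandwich (a @ a') p (b' @ b)"
proof (rule sandwich_unique)
  fix w assume outside: "\<And>u. w \<noteq> (a @ a') @ u @ b' @ b"
  show "sandwich a (sandwich a' p b') b w = 0"
  proof (cases "\<exists>v. w = a @ v @ b")
    case True
    then obtain v where "w = a @ v @ b" by blast
    with outside show ?thesis by (auto intro!: sandwich_outside)
  qed (auto intro: sandwich_outside)
qed (metis append.assoc sandwich_append)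

lemma poly_expansion:
  assumes "finite S" "{w. p w \<noteq> 0} \<subseteq> S"
  shows "p = (\<Sum>u\<in>S. smult (p u) (mono u))"
proof
  fix w
  have "(\<Sum>u\<in>S. smult (p u) (mono u)) w = (\<Sum>u\<in>S. if u = w then p w else 0)"
    unfolding sum_fun_apply mono_def by (rule sum.cong) auto
  then show "p w = (\<Sum>u\<in>S. smult (p u) (mono u)) w"
    using assms by (auto simp: sum.delta)
qed

lemma sandwich_expansion:
  assumes "finite S" "{w. p w \<noteq> 0} \<subseteq> S"
  shows "sandwich a p b = (\<Sum>u\<in>S. smult (p u) (mono (a @ u @ b)))"
  by (subst poly_expansion[OF assms]) (simp add: sandwich_sum sandwich_smult sandwich_mono)

lemma sandwich_expansion_swap:
  assumes "finite S" "{u. p u \<noteq> 0} \<subseteq> S" "finite S'" "{v. q v \<noteq> 0} \<subseteq> S'"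
  shows "(\<Sum>u\<in>S. smult (p u) (sandwich (a @ u @ m) q b))
       = (\<Sum>v\<in>S'. smult (q v) (sandwich a p (m @ v @ b)))"
proof -
  have "(\<Sum>u\<in>S. smult (p u) (sandwich (a @ u @ m) q b))
      = (\<Sum>u\<in>S. \<Sum>v\<in>S'. smult (p u * q v) (mono (a @ u @ m @ v @ b)))"
    by (simp add: sandwich_expansion[OF assms(3,4)] smult_sum smult_smult)
  also have "\<dots> = (\<Sum>v\<in>S'. smult (q v) (sandwich a p (m @ v @ b)))"
    by (subst sum.swap) (simp add: sandwich_expansion[OF assms(1,2)] smult_sum smult_smult mult.commute)
  finally show ?thesis .
qed

lemma pmul_sum_left: "pmul (sum f A) q = (\<Sum>a\<in>A. pmul (f a) q)"
  unfolding pmul_def fun_eq_iff sum_fun_apply sum_distrib_right by (rule allI sum.swap)+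

lemma pmul_sum_right: "pmul q (sum f A) = (\<Sum>a\<in>A. pmul q (f a))"
  unfolding pmul_def fun_eq_iff sum_fun_apply sum_distrib_left by (rule allI sum.swap)+

lemma pmul_smult_left: "pmul (smult c p) q = smult c (pmul p q)"
  and pmul_smult_right: "pmul p (smult c q) = smult c (pmul p q)"
  unfolding pmul_def by (auto simp: fun_eq_iff sum_distrib_left algebra_simps)

lemma pmul_pmul_expansion:
  assumes "finite Sa" "{u. a u \<noteq> 0} \<subseteq> Sa" "finite Sb" "{v. b v \<noteq> 0} \<subseteq> Sb"
  shows "pmul (pmul a g) b = (\<Sum>u\<in>Sa. \<Sum>v\<in>Sb. smult (a u * b v) (sandwich u g v))"
proof -
  have "pmul (pmul a g) b = pmul (pmul (\<Sum>u\<in>Sa. smult (a u) (mono u)) g) (\<Sum>v\<in>Sb. smult (b v) (mono v))"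
    using poly_expansion[OF assms(1,2)] poly_expansion[OF assms(3,4)]
    by (rule arg_cong2[where f = "\<lambda>x y. pmul (pmul x g) y"])
  also have "\<dots> = (\<Sum>v\<in>Sb. smult (b v) (\<Sum>u\<in>Sa. smult (a u) (sandwich u g v)))"
    by (simp add: pmul_sum_left pmul_sum_right pmul_smult_left pmul_smult_right sandwich_def)
  also have "\<dots> = (\<Sum>v\<in>Sb. \<Sum>u\<in>Sa. smult (a u * b v) (sandwich u g v))"
    by (simp only: smult_sum smult_smult mult.commute)
  also have "\<dots> = (\<Sum>u\<in>Sa. \<Sum>v\<in>Sb. smult (a u * b v) (sandwich u g v))"
    by (rule sum.swap)
  finally show ?thesis .
qed

lemma tip_eqI: "p m \<noteq> 0 \<Longrightarrow> (\<And>u. p u \<noteq> 0 \<Longrightarrow> word_le u m) \<Longrightarrow> tip p = m"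
  unfolding tip_def by (rule the_equality) (auto intro: word_le_antisym)

lemma tip_greatest:
  assumes "finite {w. p w \<noteq> 0}" "p u \<noteq> 0"
  shows "word_le u (tip p)"
proof -
  have greatest: "\<exists>m\<in>S. \<forall>u\<in>S. word_le u m" if "finite S" "S \<noteq> {}" for S :: "xsym list set"
    using that
  proof (induction rule: finite_ne_induct)
    case (insert x S)
    then obtain m where "m \<in> S" "\<forall>u\<in>S. word_le u m" by blast
    show ?case
    proof (cases "word_le x m")
      case True
      then show ?thesis using \<open>m \<in> S\<close> \<open>\<forall>u\<in>S. word_le u m\<close> by auto
    next
      case False
      then have "word_le m x" using word_le_linear by blast
      then show ?thesis using \<open>\<forall>u\<in>S. word_le u m\<close> word_le_trans by (auto simp: word_le_def)
    qed
  qed (simp add: word_le_def)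
  have "{w. p w \<noteq> 0} \<noteq> {}" using assms(2) by blast
  with greatest[OF assms(1)] obtain m where "p m \<noteq> 0" "\<And>u. p u \<noteq> 0 \<Longrightarrow> word_le u m" by blast
  moreover from this have "tip p = m" by (rule tip_eqI)
  ultimately show ?thesis using assms(2) by simp
qed

section \<open>Spans of two-sided multiples of relations\<close>

text \<open>\<open>rel_span_le n G w\<close> and \<open>rel_span_less n G w\<close> are the spaces \<open>I\<^sub>w\<close> and \<open>I\<^sub><\<^sub>w\<close> of the
  diamond lemma, spanned by the multiples \<open>a g b\<close> of relations whose leading word \<open>a tip(g) b\<close>
  is \<open>\<le> w\<close> or \<open>< w\<close>.\<close>
inductive_set rel_span :: "nat \<Rightarrow> (xsym list \<Rightarrow> 'k::field) set \<Rightarrow> (xsym list \<Rightarrow> bool) \<Rightarrow> (xsym list \<Rightarrow> 'k) set"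
  for n :: nat and G :: "(xsym list \<Rightarrow> 'k) set" and P :: "xsym list \<Rightarrow> bool" where
  zero: "0 \<in> rel_span n G P"
| scaled: "\<lbrakk>a \<in> words n; g \<in> G; b \<in> words n; P (a @ tip g @ b)\<rbrakk>
             \<Longrightarrow> smult c (sandwich a g b) \<in> rel_span n G P"
| add: "\<lbrakk>p \<in> rel_span n G P; q \<in> rel_span n G P\<rbrakk> \<Longrightarrow> p + q \<in> rel_span n G P"

abbreviation rel_span_le :: "nat \<Rightarrow> (xsym list \<Rightarrow> 'k::field) set \<Rightarrow> xsym list \<Rightarrow> (xsym list \<Rightarrow> 'k) set" where
  "rel_span_le n G w \<equiv> rel_span n G (\<lambda>u. word_le u w)"

abbreviation rel_span_less :: "nat \<Rightarrow> (xsym list \<Rightarrow> 'k::field) set \<Rightarrow> xsym list \<Rightarrow> (xsym list \<Rightarrow> 'k) set" where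
  "rel_span_less n G w \<equiv> rel_span n G (\<lambda>u. word_less u w)"

lemma rel_span_sandwich:
  "\<lbrakk>a \<in> words n; g \<in> G; b \<in> words n; P (a @ tip g @ b)\<rbrakk> \<Longrightarrow> sandwich a g b \<in> rel_span n G P"
  using rel_span.scaled[of a n g G b P 1] by simp

lemma rel_span_mono: "p \<in> rel_span n G P \<Longrightarrow> (\<And>u. P u \<Longrightarrow> Q u) \<Longrightarrow> p \<in> rel_span n G Q"
  by (induction rule: rel_span.induct) (blast intro: rel_span.intros)+

lemma rel_span_le_mono: "p \<in> rel_span_le n G v \<Longrightarrow> word_le v w \<Longrightarrow> p \<in> rel_span_le n G w"
  by (erule rel_span_mono) (rule word_le_trans)

lemma rel_span_smult: "p \<in> rel_span n G P \<Longrightarrow> smult c p \<in> rel_span n G P"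
proof (induction rule: rel_span.induct)
  case zero
  show ?case unfolding smult_0_right by (rule rel_span.zero)
next
  case (scaled a g b d)
  then show ?case unfolding smult_smult by (rule rel_span.scaled)
next
  case (add p q)
  show ?case unfolding smult_add_right using add.IH by (rule rel_span.add)
qed

lemma rel_span_uminus: "p \<in> rel_span n G P \<Longrightarrow> - p \<in> rel_span n G P"
  using rel_span_smult[of p n G P "- 1"] unfolding smult_minus_one .

lemma rel_span_diff: "p \<in> rel_span n G P \<Longrightarrow> q \<in> rel_span n G P \<Longrightarrow> p - q \<in> rel_span n G P"
  unfolding diff_conv_add_uminus by (intro rel_span.add rel_span_uminus)

lemma rel_span_diff_commute: "p - q \<in> rel_span n G P \<Longrightarrow> q - p \<in> rel_span n G P"
  by (drule rel_span_uminus) (simp only: minus_diff_eq)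

lemma rel_span_sum: "(\<And>x. x \<in> A \<Longrightarrow> f x \<in> rel_span n G P) \<Longrightarrow> sum f A \<in> rel_span n G P"
proof (induction A rule: infinite_finite_induct)
  case (infinite A)
  show ?case unfolding sum.infinite[OF infinite(1)] by (rule rel_span.zero)
next
  case empty
  show ?case unfolding sum.empty by (rule rel_span.zero)
next
  case (insert x A)
  then show ?case unfolding sum.insert[OF insert(1,2)] by (blast intro: rel_span.add)
qed

lemma diff_eq_sum_diff:
  fixes A B :: "'a \<Rightarrow> 'b::ab_group_add"
  assumes "finite I" "p \<in> I" "q \<in> I" "sum A I = sum B I"
  shows "A p - B q = sum B (I - {q}) - sum A (I - {p})"
  using assms by (simp add: sum_diff1)

lemma rel_span_diff_of_sums_eq:
  assumes "finite I" "p \<in> I" "q \<in> I" "sum A I = sum B I"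
    and "\<And>s. s \<in> I - {p} \<Longrightarrow> A s \<in> rel_span n G P" "\<And>t. t \<in> I - {q} \<Longrightarrow> B t \<in> rel_span n G P"
  shows "A p - B q \<in> rel_span n G P"
  unfolding diff_eq_sum_diff[OF assms(1-4)] by (intro rel_span_diff rel_span_sum assms(5,6))

lemma rel_span_shift:
  "p \<in> rel_span n G P \<Longrightarrow> a \<in> words n \<Longrightarrow> b \<in> words n
     \<Longrightarrow> sandwich a p b \<in> rel_span n G (\<lambda>u. \<exists>v. P v \<and> u = a @ v @ b)"
proof (induction rule: rel_span.induct)
  case zero
  show ?case unfolding sandwich_0 by (rule rel_span.zero)
next
  case (scaled a' g b' c)
  then show ?case unfolding sandwich_smult sandwich_sandwich by (intro rel_span.scaled) auto
next
  case (add p q)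
  then show ?case unfolding sandwich_add by (blast intro: rel_span.add)
qed

lemma rel_span_less_shift:
  "p \<in> rel_span_less n G w \<Longrightarrow> a \<in> words n \<Longrightarrow> b \<in> words n
     \<Longrightarrow> sandwich a p b \<in> rel_span_less n G (a @ w @ b)"
  by (rule rel_span_mono[OF rel_span_shift]) (auto intro: word_less_append)

lemma rel_span_bounded: "p \<in> rel_span n G P \<Longrightarrow> \<exists>w. p \<in> rel_span_le n G w"
proof (induction rule: rel_span.induct)
  case (scaled a g b c)
  then show ?case
    by (intro exI[of _ "a @ tip g @ b"] rel_span.scaled) (simp_all add: word_le_def)
next
  case (add p q)
  then obtain v w where "p \<in> rel_span_le n G v" "q \<in> rel_span_le n G w" by blast
  then have "p + q \<in> rel_span_le n G w \<or> p + q \<in> rel_span_le n G v"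
    using word_le_linear[of v w] by (auto intro: rel_span.add rel_span_le_mono)
  then show ?case by blast
qed (blast intro: rel_span.zero)

lemma gen_ideal_rel_span:
  assumes "p \<in> gen_ideal n G"
  shows "p \<in> rel_span n G (\<lambda>_. True)"
  using assms
proof (induction rule: gen_ideal.induct)
  case (gen a g b)
  let ?Sa = "{u. a u \<noteq> 0}" and ?Sb = "{v. b v \<noteq> 0}"
  have "finite ?Sa" "?Sa \<subseteq> words n" "finite ?Sb" "?Sb \<subseteq> words n"
    using gen(1,3) by (auto simp: alg_def)
  then have "(\<Sum>u\<in>?Sa. \<Sum>v\<in>?Sb. smult (a u * b v) (sandwich u g v)) \<in> rel_span n G (\<lambda>_. True)"
    using gen(2) by (intro rel_span_sum rel_span.scaled) auto
  moreover have "pmul (pmul a g) b = (\<Sum>u\<in>?Sa. \<Sum>v\<in>?Sb. smult (a u * b v) (sandwich u g v))"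
    using \<open>finite ?Sa\<close> \<open>finite ?Sb\<close> by (intro pmul_pmul_expansion) simp_all
  ultimately show ?case by (simp only:)
next
  case zero
  show ?case unfolding pzero_eq_zero by (rule rel_span.zero)
next
  case (add p q)
  show ?case unfolding padd_eq_plus using add.IH by (rule rel_span.add)
qed

locale quadratic_relations =
  fixes n :: nat and G :: "(xsym list \<Rightarrow> 'k::field) set"
  assumes relations_alg: "G \<subseteq> alg n"
    and monic: "g \<in> G \<Longrightarrow> g (tip g) = 1"
    and length_tip: "g \<in> G \<Longrightarrow> length (tip g) = 2"
begin

lemma finite_support: "g \<in> G \<Longrightarrow> finite {u. g u \<noteq> 0}"
  using relations_alg by (auto simp: alg_def)

lemma support_words: "g \<in> G \<Longrightarrow> g u \<noteq> 0 \<Longrightarrow> u \<in> words n"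
  using relations_alg by (auto simp: alg_def)

lemma support_le_tip: "g \<in> G \<Longrightarrow> g u \<noteq> 0 \<Longrightarrow> word_le u (tip g)"
  using finite_support by (rule tip_greatest)

lemma tip_words: "g \<in> G \<Longrightarrow> tip g \<in> words n"
  using monic support_words by fastforce

lemma rel_span_support: "p \<in> rel_span n G P \<Longrightarrow> p u \<noteq> 0 \<Longrightarrow> \<exists>v. P v \<and> word_le u v"
proof (induction rule: rel_span.induct)
  case (scaled a g b c)
  then obtain v where "u = a @ v @ b" "g v \<noteq> 0"
    using sandwich_outside[of u a b g] by fastforce
  then show ?case using scaled(2,4) support_le_tip word_le_append by blast
next
  case (add p q)
  then show ?case by (cases "p u = 0") auto
qed simp

lemma rel_span_le_support: "p \<in> rel_span_le n G w \<Longrightarrow> p u \<noteq> 0 \<Longrightarrow> word_le u w"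
  by (drule rel_span_support) (auto intro: word_le_trans)

lemma rel_span_less_support: "p \<in> rel_span_less n G w \<Longrightarrow> p u \<noteq> 0 \<Longrightarrow> word_less u w"
  by (drule rel_span_support) (auto intro: word_le_less_trans)

text \<open>The tip terms of the two expansions of \<open>a g m g' b\<close> in \<open>sandwich_expansion_swap\<close> are
  the two sides; all other terms have smaller leading words.\<close>
lemma disjoint_ambiguity_resolvable:
  assumes "g \<in> G" "g' \<in> G" "a \<in> words n" "m \<in> words n" "b \<in> words n"
  shows "sandwich a g (m @ tip g' @ b) - sandwich (a @ tip g @ m) g' b
           \<in> rel_span_less n G (a @ tip g @ m @ tip g' @ b)"
proof -
  let ?w = "a @ tip g @ m @ tip g' @ b"
  define S where "S = {u. g u \<noteq> 0}"
  define S' where "S' = {v. g' v \<noteq> 0}"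
  have fin: "finite S" "finite S'" using assms(1,2) finite_support by (simp_all add: S_def S'_def)
  have tips: "tip g \<in> S" "tip g' \<in> S'" using assms(1,2) by (simp_all add: S_def S'_def monic)
  define X where "X = (\<Sum>u\<in>S - {tip g}. smult (g u) (sandwich (a @ u @ m) g' b))"
  define Y where "Y = (\<Sum>v\<in>S' - {tip g'}. smult (g' v) (sandwich a g (m @ v @ b)))"
  have supp: "{u. g u \<noteq> 0} \<subseteq> S" "{v. g' v \<noteq> 0} \<subseteq> S'" by (simp_all add: S_def S'_def)
  have "sandwich (a @ tip g @ m) g' b + X = sandwich a g (m @ tip g' @ b) + Y"
    using sandwich_expansion_swap[OF fin(1) supp(1) fin(2) supp(2), of a m b] fin tips
    unfolding X_def Y_def by (simp add: sum.remove monic[OF assms(1)] monic[OF assms(2)])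
  then have diff: "sandwich a g (m @ tip g' @ b) - sandwich (a @ tip g @ m) g' b = X - Y"
    by (simp add: algebra_simps)
  have "X \<in> rel_span_less n G ?w" unfolding X_def
  proof (rule rel_span_sum)
    fix u assume "u \<in> S - {tip g}"
    then have "word_less u (tip g)" "u \<in> words n"
      using assms(1) support_le_tip support_words by (auto simp: S_def word_le_def)
    then show "smult (g u) (sandwich (a @ u @ m) g' b) \<in> rel_span_less n G ?w"
      using assms word_less_append[of u "tip g" a "m @ tip g' @ b"] by (simp add: rel_span.scaled)
  qed
  moreover have "Y \<in> rel_span_less n G ?w" unfolding Y_def
  proof (rule rel_span_sum)
    fix v assume "v \<in> S' - {tip g'}"
    then have "word_less v (tip g')" "v \<in> words n"
      using assms(2) support_le_tip support_words by (auto simp: S'_def word_le_def)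
    then show "smult (g' v) (sandwich a g (m @ v @ b)) \<in> rel_span_less n G ?w"
      using assms word_less_append[of v "tip g'" "a @ tip g @ m" b] by (simp add: rel_span.scaled)
  qed
  ultimately show ?thesis unfolding diff by (rule rel_span_diff)
qed

lemma monoid_ideal_gen_tip_subset_Tip: "monoid_ideal_gen n (tip ` G) \<subseteq> Tip (gen_ideal n G)"
proof
  fix w assume "w \<in> monoid_ideal_gen n (tip ` G)"
  then obtain a g b where w: "w = a @ tip g @ b" "a \<in> words n" "g \<in> G" "b \<in> words n"
    unfolding monoid_ideal_gen_def by blast
  let ?p = "sandwich a g b"
  have "?p \<in> gen_ideal n G"
    unfolding sandwich_def using w relations_alg mono_alg by (auto intro: gen_ideal.gen)
  moreover have "?p w = 1" using w monic by simp
  moreover have "tip ?p = w"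
  proof (rule tip_eqI)
    show "?p w \<noteq> 0" using \<open>?p w = 1\<close> by simp
    have "?p \<in> rel_span_le n G w"
      using w by (intro rel_span_sandwich) (simp_all add: word_le_def)
    then show "word_le u w" if "?p u \<noteq> 0" for u
      using that by (rule rel_span_le_support)
  qed
  ultimately show "w \<in> Tip (gen_ideal n G)"
    unfolding Tip_def by (force simp: pzero_eq_zero)
qed

end

section \<open>The diamond lemma for quadratic relations\<close>

locale resolvable_quadratic_relations = quadratic_relations +
  assumes inclusion_resolvable:
      "\<lbrakk>g \<in> G; g' \<in> G; tip g = tip g'\<rbrakk> \<Longrightarrow> g - g' \<in> rel_span_less n G (tip g)"
    and overlap_resolvable:
      "\<lbrakk>g \<in> G; g' \<in> G; tip g = [x, y]; tip g' = [y, z]\<rbrakk>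
         \<Longrightarrow> sandwich [] g [z] - sandwich [x] g' [] \<in> rel_span_less n G [x, y, z]"
begin

lemma ambiguity_resolvable_left:
  assumes "g \<in> G" "g' \<in> G" "a \<in> words n" "b \<in> words n" "a' \<in> words n" "b' \<in> words n"
    and same: "a @ tip g @ b = a' @ tip g' @ b'" and "length a \<le> length a'"
  shows "sandwich a g b - sandwich a' g' b' \<in> rel_span_less n G (a @ tip g @ b)"
proof -
  obtain us where us: "a' = a @ us" "tip g @ b = us @ tip g' @ b'"
  proof -
    obtain us where "a = a' @ us \<and> us @ tip g @ b = tip g' @ b' \<or> a @ us = a' \<and> tip g @ b = us @ tip g' @ b'"
      using same append_eq_append_conv2[of a "tip g @ b" a' "tip g' @ b'"] by auto
    with \<open>length a \<le> length a'\<close> that show ?thesis by (cases "us = []") auto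
  qed
  obtain x y where xy: "tip g = [x, y]"
    using length_tip[OF \<open>g \<in> G\<close>] by (auto simp: numeral_2_eq_2 length_Suc_conv)
  obtain y' z where yz: "tip g' = [y', z]"
    using length_tip[OF \<open>g' \<in> G\<close>] by (auto simp: numeral_2_eq_2 length_Suc_conv)
  txt \<open>Both tips have length two, so the second one starts at offset 0, 1 or at least 2 inside
    the first: an inclusion, an overlap or a disjoint ambiguity.\<close>
  have "us = [] \<or> (\<exists>u. us = [u]) \<or> (\<exists>u0 u1 m. us = u0 # u1 # m)"
    by (metis list.exhaust)
  then consider "us = []" | "us = [x]" "y' = y" "b = z # b'" | m where "us = tip g @ m" "b = m @ tip g' @ b'"
    using us(2) unfolding xy yz by auto
  then show ?thesis
  proof cases
    case 1
    then have "tip g = tip g'" "a' = a" "b' = b" using us xy yz by auto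
    with inclusion_resolvable[OF \<open>g \<in> G\<close> \<open>g' \<in> G\<close>] assms(3,4) show ?thesis
      using rel_span_less_shift[of "g - g'" n G "tip g" a b] by (simp add: sandwich_diff)
  next
    case 2
    with overlap_resolvable[OF \<open>g \<in> G\<close> \<open>g' \<in> G\<close> xy] yz assms(3,6)
    show ?thesis
      using rel_span_less_shift[of "sandwich [] g [z] - sandwich [x] g' []" n G "[x, y, z]" a b']
      by (simp add: sandwich_diff sandwich_sandwich us xy)
  next
    case 3
    then show ?thesis
      using disjoint_ambiguity_resolvable[OF \<open>g \<in> G\<close> \<open>g' \<in> G\<close> assms(3) _ assms(6), of m] us assms(4,5)
      by simp
  qed
qed

lemma ambiguity_resolvable:
  assumes "g \<in> G" "g' \<in> G" "a \<in> words n" "b \<in> words n" "a' \<in> words n" "b' \<in> words n"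
    and same: "a @ tip g @ b = a' @ tip g' @ b'"
  shows "sandwich a g b - sandwich a' g' b' \<in> rel_span_less n G (a @ tip g @ b)"
proof (cases "length a \<le> length a'")
  case True
  then show ?thesis by (rule ambiguity_resolvable_left[OF assms])
next
  case False
  then have "sandwich a' g' b' - sandwich a g b \<in> rel_span_less n G (a @ tip g @ b)"
    using ambiguity_resolvable_left[OF assms(2,1,5,6,3,4) same[symmetric]] same by simp
  then have "- (sandwich a' g' b' - sandwich a g b) \<in> rel_span_less n G (a @ tip g @ b)"
    by (rule rel_span_uminus)
  then show ?thesis unfolding minus_diff_eq .
qed

lemma rel_span_le_top_coeff:
  assumes "p \<in> rel_span_le n G w" and top: "g \<in> G" "a \<in> words n" "b \<in> words n" "w = a @ tip g @ b"
  shows "\<exists>c. p - smult c (sandwich a g b) \<in> rel_span_less n G w"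
  using assms(1)
proof (induction rule: rel_span.induct)
  case zero
  show ?case by (intro exI[of _ 0]) (unfold smult_0_left diff_zero, rule rel_span.zero)
next
  case (scaled a' g' b' c)
  show ?case
  proof (cases "a' @ tip g' @ b' = w")
    case True
    have "sandwich a' g' b' - sandwich a g b \<in> rel_span_less n G (a' @ tip g' @ b')"
      using True top(4) by (intro ambiguity_resolvable[OF scaled(2) top(1) scaled(1,3) top(2,3)]) simp
    then have "smult c (sandwich a' g' b' - sandwich a g b) \<in> rel_span_less n G w"
      unfolding True by (rule rel_span_smult)
    then show ?thesis unfolding smult_diff_right by blast
  next
    case False
    with scaled have "smult c (sandwich a' g' b') \<in> rel_span_less n G w"
      by (intro rel_span.scaled) (simp_all add: word_le_def)
    then show ?thesis by (intro exI[of _ 0]) (unfold smult_0_left diff_zero)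
  qed
next
  case (add p q)
  then obtain c d where "p - smult c (sandwich a g b) \<in> rel_span_less n G w"
      "q - smult d (sandwich a g b) \<in> rel_span_less n G w" by blast
  then have "(p - smult c (sandwich a g b)) + (q - smult d (sandwich a g b)) \<in> rel_span_less n G w"
    by (rule rel_span.add)
  moreover have "(p + q) - smult (c + d) (sandwich a g b)
      = (p - smult c (sandwich a g b)) + (q - smult d (sandwich a g b))"
    by (simp add: smult_add_left)
  ultimately show ?case by (metis (no_types))
qed

lemma rel_span_le_no_top:
  assumes "p \<in> rel_span_le n G w"
    and no_top: "\<And>a g b. \<lbrakk>a \<in> words n; g \<in> G; b \<in> words n\<rbrakk> \<Longrightarrow> w \<noteq> a @ tip g @ b"
  shows "p \<in> rel_span_less n G w"
  using assms(1)
proof (induction rule: rel_span.induct)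
  case (scaled a g b c)
  then show ?case using no_top[of a g b] by (intro rel_span.scaled) (auto simp: word_le_def)
qed (blast intro: rel_span.intros)+

lemma rel_span_less_below:
  assumes "p \<in> rel_span_less n G w"
  shows "p = 0 \<or> (\<exists>v\<in>words n. word_less v w \<and> p \<in> rel_span_le n G v)"
  using assms
proof (induction rule: rel_span.induct)
  case (scaled a g b c)
  then have "a @ tip g @ b \<in> words n" using tip_words[OF scaled(2)] by simp
  moreover have "smult c (sandwich a g b) \<in> rel_span_le n G (a @ tip g @ b)"
    using scaled(1-3) by (rule rel_span.scaled) (simp add: word_le_def)
  ultimately show ?case using scaled(4) by blast
next
  case (add p q)
  show ?case
  proof (cases "p = 0 \<or> q = 0")
    case True
    with add.IH show ?thesis by auto
  next
    case False
    with add.IH obtain u v where "u \<in> words n" "word_less u w" "p \<in> rel_span_le n G u"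
      "v \<in> words n" "word_less v w" "q \<in> rel_span_le n G v" by blast
    then show ?thesis using word_le_linear[of u v] by (blast intro: rel_span.add rel_span_le_mono)
  qed
qed simp

lemma tip_in_monoid_ideal:
  assumes "p \<in> rel_span_le n G w" "p \<noteq> 0"
  shows "tip p \<in> monoid_ideal_gen n (tip ` G)"
  using assms
proof (induction w arbitrary: p rule: wf_induct_rule[OF wf_word_less_words[of n]])
  case (1 w)
  have below: "tip q \<in> monoid_ideal_gen n (tip ` G)" if "q \<in> rel_span_less n G w" "q \<noteq> 0" for q
    using rel_span_less_below[OF that(1)] that(2) 1(1) by blast
  show ?case
  proof (cases "\<exists>a g b. a \<in> words n \<and> g \<in> G \<and> b \<in> words n \<and> w = a @ tip g @ b")
    case True
    then obtain a g b where top: "g \<in> G" "a \<in> words n" "b \<in> words n" "w = a @ tip g @ b" by blast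
    then obtain c where rest: "p - smult c (sandwich a g b) \<in> rel_span_less n G w"
      using rel_span_le_top_coeff[OF 1(2)] by blast
    show ?thesis
    proof (cases "c = 0")
      case True
      with rest have "p \<in> rel_span_less n G w" unfolding smult_0_left diff_zero by simp
      then show ?thesis using below 1(3) by blast
    next
      case False
      have "(p - smult c (sandwich a g b)) w = 0"
        using rel_span_less_support[OF rest, of w] by auto
      then have "p w = c" using top monic by simp
      then have "tip p = w"
        using False rel_span_le_support[OF 1(2)] by (intro tip_eqI) auto
      then show ?thesis using top unfolding monoid_ideal_gen_def by blast
    qed
  next
    case False
    then show ?thesis using below rel_span_le_no_top 1(2,3) by blast
  qed
qed

theorem Tip_gen_ideal: "Tip (gen_ideal n G) = monoid_ideal_gen n (tip ` G)"
proof
  show "Tip (gen_ideal n G) \<subseteq> monoid_ideal_gen n (tip ` G)"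
  proof
    fix m assume "m \<in> Tip (gen_ideal n G)"
    then obtain p where p: "m = tip p" "p \<in> gen_ideal n G" "p \<noteq> 0"
      unfolding Tip_def pzero_eq_zero by blast
    then obtain w where "p \<in> rel_span_le n G w"
      using gen_ideal_rel_span rel_span_bounded by blast
    then show "m \<in> monoid_ideal_gen n (tip ` G)" using tip_in_monoid_ideal p by blast
  qed
qed (rule monoid_ideal_gen_tip_subset_Tip)

end

section \<open>The relations R in normal form\<close>

lemma rr_idx: "i \<in> idx n \<Longrightarrow> rr n i \<in> idx n"
  and rr_rr: "i \<in> idx n \<Longrightarrow> rr n (rr n i) = i"
  and rr_eq_iff: "i \<in> idx n \<Longrightarrow> j \<in> idx n \<Longrightarrow> rr n i = rr n j \<longleftrightarrow> i = j"
  by (auto simp: rr_def idx_def)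

lemma rr_1 [simp]: "rr n 1 = n" "rr n (Suc 0) = n" and rr_n [simp]: "rr n n = 1"
  by (simp_all add: rr_def)

lemma sum_idx_reflect: "(\<Sum>s\<in>idx n. f (rr n s)) = (\<Sum>t\<in>idx n. f t)"
  by (rule sum.reindex_bij_witness[of _ "rr n" "rr n"]) (auto simp: rr_idx rr_rr)

datatype mat_kind = Plain | Transp | Star | Dagger

fun kind_mat :: "nat \<Rightarrow> mat_kind \<Rightarrow> nat \<Rightarrow> nat \<Rightarrow> xsym" where
  "kind_mat n Plain = umat"
| "kind_mat n Transp = mtr umat"
| "kind_mat n Star = mstar n umat"
| "kind_mat n Dagger = mdag n umat"

text \<open>The relations coming from \<open>u\<^sup>\<star>\<close> and \<open>u\<^sup>\<dagger>\<close> are reindexed by \<open>j \<mapsto> r(j), i \<mapsto> r(i)\<close>;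
  then all four families take the uniform shape of \<open>relation\<close> below.\<close>
fun kind_idx :: "nat \<Rightarrow> mat_kind \<Rightarrow> nat \<Rightarrow> nat" where
  "kind_idx n Plain j = j"
| "kind_idx n Transp j = j"
| "kind_idx n Star j = rr n j"
| "kind_idx n Dagger j = rr n j"

lemma kind_idx_idx: "j \<in> idx n \<Longrightarrow> kind_idx n k j \<in> idx n"
  and kind_idx_kind_idx: "j \<in> idx n \<Longrightarrow> kind_idx n k (kind_idx n k j) = j"
  by (cases k; simp add: rr_idx rr_rr)+

fun rel_word :: "mat_kind \<Rightarrow> nat \<Rightarrow> nat \<Rightarrow> nat \<Rightarrow> xsym list" where
  "rel_word Plain j i t = [U j t, Us i t]"
| "rel_word Transp j i t = [U t j, Us t i]"
| "rel_word Star j i t = [Us j t, U i t]"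
| "rel_word Dagger j i t = [Us t j, U t i]"

definition relation :: "nat \<Rightarrow> mat_kind \<Rightarrow> nat \<Rightarrow> nat \<Rightarrow> xsym list \<Rightarrow> 'k::field" where
  "relation n k j i = (\<Sum>t\<in>idx n. mono (rel_word k j i t)) - (if j = i then mono [] else 0)"

fun top_index :: "nat \<Rightarrow> mat_kind \<Rightarrow> nat" where
  "top_index n Plain = n"
| "top_index n Transp = n"
| "top_index n Star = 1"
| "top_index n Dagger = 1"

definition lead_word :: "nat \<Rightarrow> mat_kind \<Rightarrow> nat \<Rightarrow> nat \<Rightarrow> xsym list" where
  "lead_word n k j i = rel_word k j i (top_index n k)"

lemma Rrel_element_eq_relation:
  assumes "j \<in> idx n" "i \<in> idx n"
  shows "psub (psum (idx n) (\<lambda>s. mono [kind_mat n k j (rr n s), mdag n (kind_mat n k) s (rr n i)]))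
            (if j = i then mono [] else pzero)
       = relation n k (kind_idx n k j) (kind_idx n k i)"
proof -
  have sums: "psum (idx n) (\<lambda>s. mono [kind_mat n k j (rr n s), mdag n (kind_mat n k) s (rr n i)])
      = (\<Sum>t\<in>idx n. mono (rel_word k (kind_idx n k j) (kind_idx n k i) t))"
  proof (cases k)
    case Plain
    then show ?thesis unfolding psum_eq_sum
      using sum_idx_reflect[of "\<lambda>t. mono (rel_word k j i t)" n] assms
      by (simp add: umat_def mdag_def rr_rr)
  next
    case Transp
    then show ?thesis unfolding psum_eq_sum
      using sum_idx_reflect[of "\<lambda>t. mono (rel_word k j i t)" n] assms
      by (simp add: umat_def mtr_def mdag_def rr_rr)
  next
    case Star
    then show ?thesis unfolding psum_eq_sum using assms
      by (intro sum.cong) (simp_all add: umat_def mstar_def mdag_def rr_rr rr_idx)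
  next
    case Dagger
    then show ?thesis unfolding psum_eq_sum using assms
      by (intro sum.cong) (simp_all add: umat_def mdag_def rr_rr rr_idx)
  qed
  have flags: "kind_idx n k j = kind_idx n k i \<longleftrightarrow> j = i"
    using assms by (cases k) (simp_all add: rr_eq_iff)
  show ?thesis unfolding relation_def psub_eq_minus pzero_eq_zero sums flags ..
qed

lemma tip_generator_eq_lead_word:
  assumes "i \<in> idx n"
  shows "[kind_mat n k j n, mdag n (kind_mat n k) 1 (rr n i)] = lead_word n k (kind_idx n k j) (kind_idx n k i)"
  using assms by (cases k) (simp_all add: lead_word_def umat_def mtr_def mstar_def mdag_def rr_rr)

lemma Mset_eq: "Mset n = range (kind_mat n)"
proof -
  have "k \<in> {Plain, Transp, Star, Dagger}" for k by (cases k) simp_all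
  then have kinds: "UNIV = {Plain, Transp, Star, Dagger}" by blast
  show ?thesis unfolding Mset_def kinds by simp
qed

lemma reindex_by_kind_idx:
  assumes "\<And>k j i. j \<in> idx n \<Longrightarrow> i \<in> idx n \<Longrightarrow> F (kind_mat n k) j i = H k (kind_idx n k j) (kind_idx n k i)"
  shows "{F v j i |v j i. v \<in> Mset n \<and> j \<in> idx n \<and> i \<in> idx n} = {H k j i |k j i. j \<in> idx n \<and> i \<in> idx n}"
proof (intro equalityI subsetI)
  fix x assume "x \<in> {F v j i |v j i. v \<in> Mset n \<and> j \<in> idx n \<and> i \<in> idx n}"
  then obtain k j i where "x = F (kind_mat n k) j i" "j \<in> idx n" "i \<in> idx n"
    unfolding Mset_eq by blast
  then show "x \<in> {H k j i |k j i. j \<in> idx n \<and> i \<in> idx n}"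
    using assms kind_idx_idx by blast
next
  fix x assume "x \<in> {H k j i |k j i. j \<in> idx n \<and> i \<in> idx n}"
  then obtain k j i where "x = H k j i" "j \<in> idx n" "i \<in> idx n" by blast
  then have "x = F (kind_mat n k) (kind_idx n k j) (kind_idx n k i)"
    using assms kind_idx_idx kind_idx_kind_idx by metis
  then show "x \<in> {F v j i |v j i. v \<in> Mset n \<and> j \<in> idx n \<and> i \<in> idx n}"
    unfolding Mset_eq using \<open>j \<in> idx n\<close> \<open>i \<in> idx n\<close> kind_idx_idx by blast
qed

lemma Rrel_eq: "Rrel n = {relation n k j i |k j i. j \<in> idx n \<and> i \<in> idx n}"
  unfolding Rrel_def by (rule reindex_by_kind_idx) (rule Rrel_element_eq_relation)

lemma tip_generators_eq: "tip_generators n = {lead_word n k j i |k j i. j \<in> idx n \<and> i \<in> idx n}"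
  unfolding tip_generators_def by (rule reindex_by_kind_idx) (rule tip_generator_eq_lead_word)

lemma relation_support:
  "relation n k j i u \<noteq> (0::'k::field) \<Longrightarrow> u = [] \<or> (\<exists>t\<in>idx n. u = rel_word k j i t)"
  by (rule ccontr) (auto simp: relation_def sum_fun_apply mono_def split: if_split_asm)

lemma relation_rel_word:
  assumes "t \<in> idx n"
  shows "relation n k j i (rel_word k j i t) = (1::'k::field)"
proof -
  have "(\<Sum>s\<in>idx n. mono (rel_word k j i s) (rel_word k j i t)) = (\<Sum>s\<in>idx n. if s = t then 1 else (0::'k))"
    by (rule sum.cong) (cases k; auto simp: mono_def)+
  then show ?thesis using assms by (cases k) (simp_all add: relation_def sum_fun_apply mono_def idx_def)
qed

lemma top_index_idx: "1 \<le> n \<Longrightarrow> top_index n k \<in> idx n"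
  by (cases k) (simp_all add: idx_def)

lemma relation_lead_word: "1 \<le> n \<Longrightarrow> relation n k j i (lead_word n k j i) = (1::'k::field)"
  unfolding lead_word_def by (rule relation_rel_word) (rule top_index_idx)

lemma length_lead_word: "length (lead_word n k j i) = 2"
  by (cases k) (simp_all add: lead_word_def)

lemma rel_word_le_lead_word: "t \<in> idx n \<Longrightarrow> word_le (rel_word k j i t) (lead_word n k j i)"
  by (cases k) (auto simp: lead_word_def idx_def word_le_def intro!: word_less_Cons_first)

lemma tip_relation:
  assumes "1 \<le> n"
  shows "tip (relation n k j i :: xsym list \<Rightarrow> 'k::field) = lead_word n k j i"
proof (rule tip_eqI)
  show "relation n k j i (lead_word n k j i) \<noteq> (0::'k)"
    by (simp add: relation_lead_word[OF assms])
  fix u assume "relation n k j i u \<noteq> (0::'k)"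
  then consider "u = []" | t where "t \<in> idx n" "u = rel_word k j i t"
    using relation_support by blast
  then show "word_le u (lead_word n k j i)"
  proof cases
    case 1
    then show ?thesis by (cases k) (simp_all add: lead_word_def word_le_def word_less_length)
  qed (simp add: rel_word_le_lead_word)
qed

lemma rel_word_words: "j \<in> idx n \<Longrightarrow> i \<in> idx n \<Longrightarrow> t \<in> idx n \<Longrightarrow> rel_word k j i t \<in> words n"
  by (cases k) simp_all

lemma relation_alg:
  assumes "j \<in> idx n" "i \<in> idx n"
  shows "(relation n k j i :: xsym list \<Rightarrow> 'k::field) \<in> alg n"
proof -
  have "{u. relation n k j i u \<noteq> (0::'k)} \<subseteq> insert [] (rel_word k j i ` idx n)"
    using relation_support by blast
  moreover have "rel_word k j i t \<in> words n" if "t \<in> idx n" for t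
    using that by (rule rel_word_words[OF assms])
  ultimately show ?thesis unfolding alg_def
    by (auto intro: finite_subset simp: idx_def)
qed

lemma quadratic_relations_Rrel:
  assumes "1 \<le> n"
  shows "quadratic_relations n (Rrel n :: (xsym list \<Rightarrow> 'k::field) set)"
proof
  show "Rrel n \<subseteq> (alg n :: (xsym list \<Rightarrow> 'k) set)"
    unfolding Rrel_eq using relation_alg by blast
  fix g :: "xsym list \<Rightarrow> 'k" assume "g \<in> Rrel n"
  then obtain k j i where "g = relation n k j i" unfolding Rrel_eq by blast
  then show "g (tip g) = 1" "length (tip g) = 2"
    by (simp_all add: tip_relation[OF assms] relation_lead_word[OF assms] length_lead_word)
qed

lemma relation_mem_Rrel: "j \<in> idx n \<Longrightarrow> i \<in> idx n \<Longrightarrow> relation n k j i \<in> Rrel n"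
  unfolding Rrel_eq by blast

lemma rel_span_relation:
  assumes "1 \<le> n" "j \<in> idx n" "i \<in> idx n" "a \<in> words n" "b \<in> words n" "P (a @ lead_word n k j i @ b)"
  shows "sandwich a (relation n k j i) b \<in> rel_span n (Rrel n) P"
  using assms(4,5,6) relation_mem_Rrel[OF assms(2,3)]
  by (intro rel_span_sandwich) (simp_all add: tip_relation[OF assms(1)])

lemma relation_in_rel_span:
  assumes "1 \<le> n" "j \<in> idx n" "i \<in> idx n" "P (lead_word n k j i)"
  shows "relation n k j i \<in> rel_span n (Rrel n) P"
  using rel_span_relation[OF assms(1-3), of "[]" "[]" P k] assms(4) unfolding sandwich_Nil by simp

lemma diagonal_sums_eq:
  "(\<Sum>t\<in>idx n. relation n Plain t t) = (\<Sum>t\<in>idx n. relation n Transp t t :: xsym list \<Rightarrow> 'k::field)"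
  "(\<Sum>t\<in>idx n. relation n Star t t) = (\<Sum>t\<in>idx n. relation n Dagger t t :: xsym list \<Rightarrow> 'k::field)"
  by (simp_all add: relation_def sum_subtractf) (rule sum.swap)+

lemma inclusion_Plain_Transp:
  assumes "1 \<le> n"
  shows "relation n Plain n n - relation n Transp n n \<in> rel_span_less n (Rrel n) [U n n, Us n n]"
proof (rule rel_span_diff_of_sums_eq[of "idx n" n n "\<lambda>t. relation n Plain t t" "\<lambda>t. relation n Transp t t"])
  fix t assume "t \<in> idx n - {n}"
  then have "t \<in> idx n" "t < n" by (auto simp: idx_def)
  then show "relation n Plain t t \<in> rel_span_less n (Rrel n) [U n n, Us n n]"
    "relation n Transp t t \<in> rel_span_less n (Rrel n) [U n n, Us n n]"
    using assms by (auto intro!: relation_in_rel_span word_less_Cons_first simp: lead_word_def)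
qed (use assms diagonal_sums_eq in \<open>simp_all add: idx_def\<close>)

lemma inclusion_Star_Dagger:
  assumes "1 \<le> n"
  shows "relation n Star 1 1 - relation n Dagger 1 1 \<in> rel_span_less n (Rrel n) [Us 1 1, U 1 1]"
proof (rule rel_span_diff_of_sums_eq[of "idx n" 1 1 "\<lambda>t. relation n Star t t" "\<lambda>t. relation n Dagger t t"])
  fix t assume "t \<in> idx n - {1}"
  then have "t \<in> idx n" "1 < t" by (auto simp: idx_def)
  then show "relation n Star t t \<in> rel_span_less n (Rrel n) [Us 1 1, U 1 1]"
    "relation n Dagger t t \<in> rel_span_less n (Rrel n) [Us 1 1, U 1 1]"
    using assms by (auto intro!: relation_in_rel_span word_less_Cons_first simp: lead_word_def)
qed (use assms diagonal_sums_eq in \<open>simp_all add: idx_def\<close>)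

text \<open>The two ways of reducing \<open>\<Sum>\<^sub>s\<^sub>,\<^sub>t L\<^sub>t M\<^sub>s\<^sub>t R\<^sub>s\<close> with the two families of
  relations give the same result; the constant terms agree because \<open>L\<^sub>b = R\<^sub>j\<close>.\<close>
lemma overlap_sums_eq:
  fixes L R :: "nat \<Rightarrow> xsym" and M :: "nat \<Rightarrow> nat \<Rightarrow> xsym"
  assumes "finite I" "j \<in> I" "b \<in> I" "L b = R j"
  shows "(\<Sum>s\<in>I. sandwich [] ((\<Sum>t\<in>I. mono [L t, M s t]) - (if j = s then mono [] else 0)) [R s])
       = (\<Sum>t\<in>I. sandwich [L t] ((\<Sum>s\<in>I. mono [M s t, R s]) - (if t = b then mono [] else 0)) []
            :: xsym list \<Rightarrow> 'k::field)"
proof -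
  have unit: "sandwich a (if c then mono [] else 0) b = (if c then mono (a @ b) else 0)" for a b c
    by (simp add: sandwich_mono)
  have "(\<Sum>s\<in>I. sandwich [] ((\<Sum>t\<in>I. mono [L t, M s t]) - (if j = s then mono [] else 0)) [R s])
      = (\<Sum>s\<in>I. \<Sum>t\<in>I. mono [L t, M s t, R s]) - (mono [R j] :: xsym list \<Rightarrow> 'k)"
    using assms by (simp add: sandwich_diff sandwich_sum sandwich_mono unit sum_subtractf sum.delta)
  moreover have "(\<Sum>t\<in>I. sandwich [L t] ((\<Sum>s\<in>I. mono [M s t, R s]) - (if t = b then mono [] else 0)) [])
      = (\<Sum>t\<in>I. \<Sum>s\<in>I. mono [L t, M s t, R s]) - (mono [L b] :: xsym list \<Rightarrow> 'k)"
    using assms by (simp add: sandwich_diff sandwich_sum sandwich_mono unit sum_subtractf sum.delta')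
  moreover have "(\<Sum>s\<in>I. \<Sum>t\<in>I. mono [L t, M s t, R s]) = (\<Sum>t\<in>I. \<Sum>s\<in>I. mono [L t, M s t, R s] :: xsym list \<Rightarrow> 'k)"
    by (rule sum.swap)
  ultimately show ?thesis using assms(4) by simp
qed

lemma overlap_Plain_Dagger:
  assumes "1 \<le> n" "j \<in> idx n" "b \<in> idx n"
  shows "sandwich [] (relation n Plain j 1) [U 1 b] - sandwich [U j n] (relation n Dagger n b) []
           \<in> rel_span_less n (Rrel n :: (xsym list \<Rightarrow> 'k::field) set) [U j n, Us 1 n, U 1 b]"
proof (rule rel_span_diff_of_sums_eq[of "idx n" 1 n "\<lambda>s. sandwich [] (relation n Plain j s) [U s b]"
      "\<lambda>t. sandwich [U j t] (relation n Dagger t b) []"])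
  show "(\<Sum>s\<in>idx n. sandwich [] (relation n Plain j s) [U s b])
      = (\<Sum>t\<in>idx n. sandwich [U j t] (relation n Dagger t b) [] :: xsym list \<Rightarrow> 'k)"
    unfolding relation_def rel_word.simps using assms by (intro overlap_sums_eq) (simp_all add: idx_def)
next
  fix s assume "s \<in> idx n - {1}"
  then show "sandwich [] (relation n Plain j s) [U s b] \<in> rel_span_less n (Rrel n) [U j n, Us 1 n, U 1 b]"
    using assms by (intro rel_span_relation) (auto simp: lead_word_def idx_def intro!: word_less_Cons word_less_Cons_first)
next
  fix t assume "t \<in> idx n - {n}"
  then show "sandwich [U j t] (relation n Dagger t b) [] \<in> rel_span_less n (Rrel n) [U j n, Us 1 n, U 1 b]"
    using assms by (intro rel_span_relation) (auto simp: lead_word_def idx_def intro!: word_less_Cons_first)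
qed (use assms in \<open>simp_all add: idx_def\<close>)

lemma overlap_Transp_Star:
  assumes "1 \<le> n" "j \<in> idx n" "b \<in> idx n"
  shows "sandwich [] (relation n Transp j 1) [U b 1] - sandwich [U n j] (relation n Star n b) []
           \<in> rel_span_less n (Rrel n :: (xsym list \<Rightarrow> 'k::field) set) [U n j, Us n 1, U b 1]"
proof (rule rel_span_diff_of_sums_eq[of "idx n" 1 n "\<lambda>s. sandwich [] (relation n Transp j s) [U b s]"
      "\<lambda>t. sandwich [U t j] (relation n Star t b) []"])
  show "(\<Sum>s\<in>idx n. sandwich [] (relation n Transp j s) [U b s])
      = (\<Sum>t\<in>idx n. sandwich [U t j] (relation n Star t b) [] :: xsym list \<Rightarrow> 'k)"
    unfolding relation_def rel_word.simps using assms by (intro overlap_sums_eq) (simp_all add: idx_def)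
next
  fix s assume "s \<in> idx n - {1}"
  then show "sandwich [] (relation n Transp j s) [U b s] \<in> rel_span_less n (Rrel n) [U n j, Us n 1, U b 1]"
    using assms by (intro rel_span_relation) (auto simp: lead_word_def idx_def intro!: word_less_Cons word_less_Cons_first)
next
  fix t assume "t \<in> idx n - {n}"
  then show "sandwich [U t j] (relation n Star t b) [] \<in> rel_span_less n (Rrel n) [U n j, Us n 1, U b 1]"
    using assms by (intro rel_span_relation) (auto simp: lead_word_def idx_def intro!: word_less_Cons_first)
qed (use assms in \<open>simp_all add: idx_def\<close>)

lemma overlap_Star_Transp:
  assumes "1 \<le> n" "a \<in> idx n" "i \<in> idx n"
  shows "sandwich [] (relation n Star a n) [Us n i] - sandwich [Us a 1] (relation n Transp 1 i) []
           \<in> rel_span_less n (Rrel n :: (xsym list \<Rightarrow> 'k::field) set) [Us a 1, U n 1, Us n i]"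
proof (rule rel_span_diff_of_sums_eq[of "idx n" n 1 "\<lambda>s. sandwich [] (relation n Star a s) [Us s i]"
      "\<lambda>t. sandwich [Us a t] (relation n Transp t i) []"])
  show "(\<Sum>s\<in>idx n. sandwich [] (relation n Star a s) [Us s i])
      = (\<Sum>t\<in>idx n. sandwich [Us a t] (relation n Transp t i) [] :: xsym list \<Rightarrow> 'k)"
    unfolding relation_def rel_word.simps using assms by (intro overlap_sums_eq) (simp_all add: idx_def)
next
  fix s assume "s \<in> idx n - {n}"
  then show "sandwich [] (relation n Star a s) [Us s i] \<in> rel_span_less n (Rrel n) [Us a 1, U n 1, Us n i]"
    using assms by (intro rel_span_relation) (auto simp: lead_word_def idx_def intro!: word_less_Cons word_less_Cons_first)
next
  fix t assume "t \<in> idx n - {1}"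
  then show "sandwich [Us a t] (relation n Transp t i) [] \<in> rel_span_less n (Rrel n) [Us a 1, U n 1, Us n i]"
    using assms by (intro rel_span_relation) (auto simp: lead_word_def idx_def intro!: word_less_Cons_first)
qed (use assms in \<open>simp_all add: idx_def\<close>)

lemma overlap_Dagger_Plain:
  assumes "1 \<le> n" "a \<in> idx n" "i \<in> idx n"
  shows "sandwich [] (relation n Dagger a n) [Us i n] - sandwich [Us 1 a] (relation n Plain 1 i) []
           \<in> rel_span_less n (Rrel n :: (xsym list \<Rightarrow> 'k::field) set) [Us 1 a, U 1 n, Us i n]"
proof (rule rel_span_diff_of_sums_eq[of "idx n" n 1 "\<lambda>s. sandwich [] (relation n Dagger a s) [Us i s]"
      "\<lambda>t. sandwich [Us t a] (relation n Plain t i) []"])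
  show "(\<Sum>s\<in>idx n. sandwich [] (relation n Dagger a s) [Us i s])
      = (\<Sum>t\<in>idx n. sandwich [Us t a] (relation n Plain t i) [] :: xsym list \<Rightarrow> 'k)"
    unfolding relation_def rel_word.simps using assms by (intro overlap_sums_eq) (simp_all add: idx_def)
next
  fix s assume "s \<in> idx n - {n}"
  then show "sandwich [] (relation n Dagger a s) [Us i s] \<in> rel_span_less n (Rrel n) [Us 1 a, U 1 n, Us i n]"
    using assms by (intro rel_span_relation) (auto simp: lead_word_def idx_def intro!: word_less_Cons word_less_Cons_first)
next
  fix t assume "t \<in> idx n - {1}"
  then show "sandwich [Us t a] (relation n Plain t i) [] \<in> rel_span_less n (Rrel n) [Us 1 a, U 1 n, Us i n]"
    using assms by (intro rel_span_relation) (auto simp: lead_word_def idx_def intro!: word_less_Cons_first)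
qed (use assms in \<open>simp_all add: idx_def\<close>)

lemma Rrel_cases:
  assumes "g \<in> Rrel n"
  obtains k j i where "g = relation n k j i" "j \<in> idx n" "i \<in> idx n"
  using assms unfolding Rrel_eq by blast

lemma Rrel_inclusion_resolvable:
  assumes "2 \<le> n" "g \<in> Rrel n" "g' \<in> Rrel n" "tip g = tip g'"
  shows "g - g' \<in> rel_span_less n (Rrel n :: (xsym list \<Rightarrow> 'k::field) set) (tip g)"
proof -
  obtain k j i where g: "g = relation n k j i" "j \<in> idx n" "i \<in> idx n"
    using assms(2) by (rule Rrel_cases)
  obtain k' j' i' where g': "g' = relation n k' j' i'" "j' \<in> idx n" "i' \<in> idx n"
    using assms(3) by (rule Rrel_cases)
  have n: "1 \<le> n" using assms(1) by simp
  have leads: "lead_word n k j i = lead_word n k' j' i'"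
    using assms(4) by (simp add: g g' tip_relation[OF n])
  let ?S = "rel_span_less n (Rrel n :: (xsym list \<Rightarrow> 'k) set)"
  have PT: "relation n Plain n n - relation n Transp n n \<in> ?S [U n n, Us n n]"
    and SD: "relation n Star 1 1 - relation n Dagger 1 1 \<in> ?S [Us 1 1, U 1 1]"
    using inclusion_Plain_Transp[OF n] inclusion_Star_Dagger[OF n] .
  have "relation n k j i - relation n k' j' i' \<in> ?S (lead_word n k j i)"
    using leads PT SD rel_span_diff_commute[OF PT] rel_span_diff_commute[OF SD]
    by (cases k; cases k') (auto simp: lead_word_def intro: rel_span.zero)
  then show ?thesis unfolding g(1) g'(1) tip_relation[OF n] .
qed

lemma Rrel_overlap_resolvable:
  assumes "2 \<le> n" "g \<in> Rrel n" "g' \<in> Rrel n" "tip g = [x, y]" "tip g' = [y, z]"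
  shows "sandwich [] g [z] - sandwich [x] g' [] \<in> rel_span_less n (Rrel n :: (xsym list \<Rightarrow> 'k::field) set) [x, y, z]"
proof -
  obtain k j i where g: "g = relation n k j i" "j \<in> idx n" "i \<in> idx n"
    using assms(2) by (rule Rrel_cases)
  obtain k' j' i' where g': "g' = relation n k' j' i'" "j' \<in> idx n" "i' \<in> idx n"
    using assms(3) by (rule Rrel_cases)
  have n: "1 \<le> n" using assms(1) by simp
  have leads: "lead_word n k j i = [x, y]" "lead_word n k' j' i' = [y, z]"
    using assms(4,5) by (simp_all add: g g' tip_relation[OF n])
  let ?S = "rel_span_less n (Rrel n :: (xsym list \<Rightarrow> 'k) set)"
  have "sandwich [] (relation n k j i) [z] - sandwich [x] (relation n k' j' i') [] \<in> ?S [x, y, z]"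
  proof (cases k; cases k')
    assume "k = Plain" "k' = Dagger"
    with leads g'(3) show ?thesis
      using overlap_Plain_Dagger[OF n g(2), of i', where 'k = 'k] by (auto simp: lead_word_def)
  next
    assume "k = Transp" "k' = Star"
    with leads g'(3) show ?thesis
      using overlap_Transp_Star[OF n g(2), of i', where 'k = 'k] by (auto simp: lead_word_def)
  next
    assume "k = Star" "k' = Transp"
    with leads g'(3) show ?thesis
      using overlap_Star_Transp[OF n g(2), of i', where 'k = 'k] by (auto simp: lead_word_def)
  next
    assume "k = Dagger" "k' = Plain"
    with leads g'(3) show ?thesis
      using overlap_Dagger_Plain[OF n g(2), of i', where 'k = 'k] by (auto simp: lead_word_def)
  qed (use leads assms(1) in \<open>auto simp: lead_word_def\<close>)
  then show ?thesis unfolding g(1) g'(1) .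
qed

lemma resolvable_quadratic_relations_Rrel:
  assumes "2 \<le> n"
  shows "resolvable_quadratic_relations n (Rrel n :: (xsym list \<Rightarrow> 'k::field) set)"
proof (rule resolvable_quadratic_relations.intro)
  show "quadratic_relations n (Rrel n :: (xsym list \<Rightarrow> 'k) set)"
    using assms by (intro quadratic_relations_Rrel) simp
  show "resolvable_quadratic_relations_axioms n (Rrel n :: (xsym list \<Rightarrow> 'k) set)"
    by unfold_locales (use Rrel_inclusion_resolvable Rrel_overlap_resolvable assms in blast)+
qed

lemma tip_generators_length: "t \<in> tip_generators n \<Longrightarrow> length t = 2"
  unfolding tip_generators_eq by (auto simp: length_lead_word)

lemma tip_generators_words: "1 \<le> n \<Longrightarrow> tip_generators n \<subseteq> words n"
  unfolding tip_generators_eq by (auto simp: lead_word_def intro!: rel_word_words top_index_idx)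

lemma Tip_Iideal:
  assumes "2 \<le> n"
  shows "Tip (Iideal n :: (xsym list \<Rightarrow> 'k::field) set) = monoid_ideal_gen n (tip_generators n)"
proof -
  have n: "1 \<le> n" using assms by simp
  have "tip ` (Rrel n :: (xsym list \<Rightarrow> 'k) set)
      = {tip (relation n k j i :: xsym list \<Rightarrow> 'k) |k j i. j \<in> idx n \<and> i \<in> idx n}"
    unfolding Rrel_eq by blast
  also have "\<dots> = tip_generators n"
    unfolding tip_generators_eq by (simp add: tip_relation[OF n])
  finally have tips: "tip ` (Rrel n :: (xsym list \<Rightarrow> 'k) set) = tip_generators n" .
  show ?thesis
    unfolding Iideal_def tips[symmetric] using resolvable_quadratic_relations_Rrel[OF assms]
    by (rule resolvable_quadratic_relations.Tip_gen_ideal)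
qed

section \<open>Generators of monoid ideals\<close>

lemma generator_mem_monoid_ideal_gen: "g \<in> G \<Longrightarrow> g \<in> monoid_ideal_gen n G"
  unfolding monoid_ideal_gen_def
  by (rule CollectI, rule exI[of _ "[]"], rule exI[of _ g], rule exI[of _ "[]"]) simp

lemma length_mem_monoid_ideal_gen:
  "m \<in> monoid_ideal_gen n G \<Longrightarrow> (\<And>g. g \<in> G \<Longrightarrow> d \<le> length g) \<Longrightarrow> d \<le> length m"
  unfolding monoid_ideal_gen_def by force

lemma uniform_length_generators_least:
  assumes "monoid_ideal_gen n G = monoid_ideal_gen n G0" "\<And>t. t \<in> G0 \<Longrightarrow> length t = d"
  shows "G0 \<subseteq> G"
proof
  fix t assume "t \<in> G0"
  then have "t \<in> monoid_ideal_gen n G"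
    using assms(1) generator_mem_monoid_ideal_gen by blast
  then obtain a g b where t: "t = a @ g @ b" "g \<in> G" unfolding monoid_ideal_gen_def by blast
  have "g \<in> monoid_ideal_gen n G0"
    using assms(1) generator_mem_monoid_ideal_gen[OF t(2)] by blast
  then have "d \<le> length g" using assms(2) length_mem_monoid_ideal_gen by fastforce
  with t assms(2)[OF \<open>t \<in> G0\<close>] have "a = []" "b = []" by auto
  with t show "t \<in> G" by simp
qed

theorem proposition4p1:
  fixes n :: nat
  assumes "n \<ge> 2"
  defines "TI \<equiv> Tip (Iideal n :: (xsym list \<Rightarrow> 'k::field) set)"
  shows "tip_generators n \<subseteq> words n
       \<and> monoid_ideal_gen n (tip_generators n) = TI
       \<and> (\<forall>G. G \<subseteq> words n \<and> monoid_ideal_gen n G = TI \<longrightarrow> tip_generators n \<subseteq> G)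
       \<and> (\<forall>G. G \<subseteq> words n \<and> monoid_ideal_gen n G = TI
              \<and> (\<forall>G'. G' \<subseteq> G \<and> monoid_ideal_gen n G' = TI \<longrightarrow> G' = G)
              \<longrightarrow> G = tip_generators n)
       \<and> {[x] | x. x \<in> Xn n} \<inter> TI = {}"
proof -
  have TI: "TI = monoid_ideal_gen n (tip_generators n)"
    unfolding TI_def by (rule Tip_Iideal[OF assms(1)])
  have least: "tip_generators n \<subseteq> G" if "monoid_ideal_gen n G = TI" for G
    using that TI by (intro uniform_length_generators_least[of n G _ 2] tip_generators_length) simp_all
  have short: "m \<in> TI \<Longrightarrow> 2 \<le> length m" for m
    unfolding TI by (erule length_mem_monoid_ideal_gen) (simp add: tip_generators_length)
  show ?thesis
  proof (intro conjI allI impI)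
    show "tip_generators n \<subseteq> words n" using assms(1) by (intro tip_generators_words) simp
    show "monoid_ideal_gen n (tip_generators n) = TI" by (rule TI[symmetric])
    show "{[x] |x. x \<in> Xn n} \<inter> TI = {}" using short by fastforce
    fix G assume "G \<subseteq> words n \<and> monoid_ideal_gen n G = TI"
    then show "tip_generators n \<subseteq> G" using least by blast
  next
    fix G assume "G \<subseteq> words n \<and> monoid_ideal_gen n G = TI
      \<and> (\<forall>G'. G' \<subseteq> G \<and> monoid_ideal_gen n G' = TI \<longrightarrow> G' = G)"
    then show "G = tip_generators n" using least TI by blast
  qed
qed

end
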